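(* Consider the following random bipartite graph $G$ on $L\cup R$ with $|L|=|R|=n$ (with $n$ divisible by $6$): $L=L_1\cup L_2$, $R=R_1\cup R_2$ with $|L_1|=|R_1|=n/6$ and $|L_2|=|R_2|=5n/6$; every vertex of $L$ is adjacent to every vertex of $R_1$, every vertex of $R$ is adjacent to every vertex of $L_1$, and in addition a uniformly random perfect matching $M$ between $L_2$ and $R_2$ is added; each vertex's adjacency list is a uniformly random permutation of its neighbors. Any deterministic algorithm that accesses $G$ via neighbor queries and pair queries (and knows all degrees and the partition $L_1,L_2,R_1,R_2$) requires $\Omega(n^2)$ queries in expectation to discover $n/3$ edges of $M$.
   Context: A neighbor query $Q_1(u,i)$ returns the $i$-th entry of $u$'s adjacency list; a pair query $Q_2(u,v)$ returns whether $(u,v)$ is an edge. An edge $(u,v)\in M$ is discovered once the answers to the queries made so far uniquely identify $(u,v)$ as an edge of $M$. *)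

theory Defs
  imports Complex_Main
begin

text \<open>Vertices: Inl i is the left vertex i, Inr j the right vertex j (0 <= i,j < n).
  L1 = Inl ` {0..<n div 6}, L2 = Inl ` {n div 6..<n}; R1, R2 analogously.
  The random matching M is a set of index pairs (i,j), meaning the edge (Inl i, Inr j).\<close>

type_synonym vert = "nat + nat"

definition is_vert :: "nat \<Rightarrow> vert \<Rightarrow> bool" where
  "is_vert n v = (case v of Inl i \<Rightarrow> i < n | Inr j \<Rightarrow> j < n)"

definition perfect_matching_L2R2 :: "nat \<Rightarrow> (nat \<times> nat) set \<Rightarrow> bool" where
  "perfect_matching_L2R2 n M \<longleftrightarrow>
     M \<subseteq> {n div 6..<n} \<times> {n div 6..<n} \<and>
     (\<forall>i\<in>{n div 6..<n}. \<exists>!j. (i, j) \<in> M) \<and>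
     (\<forall>j\<in>{n div 6..<n}. \<exists>!i. (i, j) \<in> M)"

definition lr_edge :: "nat \<Rightarrow> (nat \<times> nat) set \<Rightarrow> nat \<Rightarrow> nat \<Rightarrow> bool" where
  "lr_edge n M i j \<longleftrightarrow> i < n \<and> j < n \<and> (i < n div 6 \<or> j < n div 6 \<or> (i, j) \<in> M)"

fun is_edge :: "nat \<Rightarrow> (nat \<times> nat) set \<Rightarrow> vert \<Rightarrow> vert \<Rightarrow> bool" where
  "is_edge n M (Inl i) (Inr j) = lr_edge n M i j"
| "is_edge n M (Inr j) (Inl i) = lr_edge n M i j"
| "is_edge n M _ _ = False"

definition nbrs :: "nat \<Rightarrow> (nat \<times> nat) set \<Rightarrow> vert \<Rightarrow> vert set" where
  "nbrs n M u = {v. is_edge n M u v}"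

text \<open>The set of all valid inputs; the uniform distribution on it is exactly
  "M uniform, adjacency lists independent uniform permutations".\<close>
type_synonym input = "(nat \<times> nat) set \<times> (vert \<Rightarrow> vert list)"

definition inputs :: "nat \<Rightarrow> input set" where
  "inputs n = {(M, adj). perfect_matching_L2R2 n M \<and>
      (\<forall>v. if is_vert n v then distinct (adj v) \<and> set (adj v) = nbrs n M v
           else adj v = [])}"

datatype query = Q1 vert nat | Q2 vert vert
datatype answer = A1 "vert option" | A2 bool

fun answer_of :: "nat \<Rightarrow> input \<Rightarrow> query \<Rightarrow> answer" where
  "answer_of n (M, adj) (Q1 u i) = A1 (if i < length (adj u) then Some (adj u ! i) else None)"
| "answer_of n (M, adj) (Q2 u v) = A2 (is_edge n M u v)"

text \<open>A deterministic adaptive algorithm chooses its next query from the history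
  of queries and answers so far.\<close>
type_synonym algorithm = "(query \<times> answer) list \<Rightarrow> query"

fun history :: "nat \<Rightarrow> algorithm \<Rightarrow> input \<Rightarrow> nat \<Rightarrow> (query \<times> answer) list" where
  "history n alg x 0 = []"
| "history n alg x (Suc t) =
     (let h = history n alg x t; q = alg h in h @ [(q, answer_of n x q)])"

definition consistent :: "nat \<Rightarrow> (query \<times> answer) list \<Rightarrow> input \<Rightarrow> bool" where
  "consistent n h y \<longleftrightarrow> (\<forall>(q, a) \<in> set h. answer_of n y q = a)"

definition discovered :: "nat \<Rightarrow> algorithm \<Rightarrow> input \<Rightarrow> nat \<Rightarrow> (nat \<times> nat) set" where
  "discovered n alg x t =
     {e \<in> fst x. \<forall>y \<in> inputs n. consistent n (history n alg x t) y \<longrightarrow> e \<in> fst y}"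

definition succeeds_by :: "nat \<Rightarrow> algorithm \<Rightarrow> input \<Rightarrow> nat \<Rightarrow> bool" where
  "succeeds_by n alg x t \<longleftrightarrow> n div 3 \<le> card (discovered n alg x t)"

definition num_queries :: "nat \<Rightarrow> algorithm \<Rightarrow> input \<Rightarrow> nat" where
  "num_queries n alg x = (LEAST t. succeeds_by n alg x t)"

definition expected_queries :: "nat \<Rightarrow> algorithm \<Rightarrow> real" where
  "expected_queries n alg =
     (\<Sum>x\<in>inputs n. real (num_queries n alg x)) / real (card (inputs n))"

end

theory Submission
  imports Defs "HOL-Combinatorics.Permutations"
begin

text \<open>Let \<open>k = n/6\<close> and call an edge of \<open>M\<close> revealed once some answer exhibits it as an edge.
  A switching argument shows that revealing queries are unlikely unless they are expensive. A
  neighbour query at \<open>v\<close>, made while at most \<open>k/2\<close> positions of the list of \<open>v\<close> have been probed,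
  returns the matching partner of \<open>v\<close> with probability at most \<open>2/k\<close>: the partner can be moved to
  any unprobed position without changing the history. A pair query \<open>(u, w)\<close>, made while \<open>u\<close> and
  \<open>w\<close> occur in at most \<open>k\<close> earlier pair queries and at most \<open>k\<close> edges are revealed, hits an edge of
  \<open>M\<close> with probability at most \<open>1/k\<close>: that edge can be exchanged with any of \<open>k\<close> other matching
  edges. So among the first \<open>T\<close> queries an average input sees at most \<open>3T/k\<close> such cheap revealing
  queries. Revealing queries that are not cheap reveal edges with a heavily probed endpoint, of
  which there are at most \<open>8T/k\<close>; and an edge that is discovered without being revealed has about
  \<open>4k\<close> pair queries at its endpoints, for otherwise exchanging it yields a consistent input
  without it. For \<open>T \<approx> k\<^sup>2/40\<close> every input on which \<open>n/3 = 2k\<close> edges are discovered within \<open>T\<close>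
  queries therefore has at least \<open>k/2\<close> cheap revealing queries, so by Markov's inequality at most
  15 percent of the inputs succeed within \<open>T\<close> queries, and the expectation is at least \<open>0.85 T = \<Omega>(n\<^sup>2)\<close>.\<close>

lemma length_history [simp]: "length (history n alg x t) = t"
  by (induction t) (auto simp: Let_def)

lemma set_history_mono: "t \<le> t' \<Longrightarrow> set (history n alg x t) \<subseteq> set (history n alg x t')"
  by (induction t') (auto simp: le_Suc_eq Let_def)

lemma consistent_history: "consistent n (history n alg x t) x"
  by (induction t) (auto simp: consistent_def Let_def)

lemma history_eq_if_consistent:
  "consistent n (history n alg x t) y \<Longrightarrow> history n alg y t = history n alg x t"
proof (induction t)
  case (Suc t)
  then have "history n alg y t = history n alg x t"
    by (simp add: consistent_def Let_def)
  with Suc.prems show ?case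
    by (simp add: consistent_def Let_def)
qed simp

lemma discovered_mono: "t \<le> t' \<Longrightarrow> discovered n alg x t \<subseteq> discovered n alg x t'"
  using set_history_mono unfolding discovered_def consistent_def by fast

definition verts :: "nat \<Rightarrow> vert set" where
  "verts n = Inl ` {..<n} \<union> Inr ` {..<n}"

lemma is_vert_iff: "is_vert n v \<longleftrightarrow> v \<in> verts n"
  by (cases v) (auto simp: is_vert_def verts_def)

lemma nbrs_subset_verts: "nbrs n M u \<subseteq> verts n"
proof
  fix v assume "v \<in> nbrs n M u"
  then show "v \<in> verts n"
    by (cases u; cases v) (auto simp: nbrs_def lr_edge_def verts_def)
qed

lemma finite_nbrs [simp]: "finite (nbrs n M u)"
  using nbrs_subset_verts by (rule finite_subset) (simp add: verts_def)

lemma inputsI: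
  assumes "perfect_matching_L2R2 n M"
    and "\<And>v. is_vert n v \<Longrightarrow> distinct (adj v) \<and> set (adj v) = nbrs n M v"
    and "\<And>v. \<not> is_vert n v \<Longrightarrow> adj v = []"
  shows "(M, adj) \<in> inputs n"
  using assms by (simp add: inputs_def)

lemma inputs_matching: "x \<in> inputs n \<Longrightarrow> perfect_matching_L2R2 n (fst x)"
  by (auto simp: inputs_def)

lemma inputs_adj:
  "x \<in> inputs n \<Longrightarrow> is_vert n v \<Longrightarrow> distinct (snd x v) \<and> set (snd x v) = nbrs n (fst x) v"
  by (auto simp: inputs_def split: if_splits)

lemma inputs_adj_Nil: "x \<in> inputs n \<Longrightarrow> \<not> is_vert n v \<Longrightarrow> snd x v = []"
  by (auto simp: inputs_def split: if_splits)

lemma answer_of_Q1 [simp]: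
  "answer_of n x (Q1 u p) = A1 (if p < length (snd x u) then Some (snd x u ! p) else None)"
  by (cases x) simp

lemma answer_of_Q2 [simp]: "answer_of n x (Q2 u v) = A2 (is_edge n (fst x) u v)"
  by (cases x) simp

lemma length_adj_eq_card_nbrs:
  "x \<in> inputs n \<Longrightarrow> is_vert n v \<Longrightarrow> length (snd x v) = card (nbrs n (fst x) v)"
  by (metis distinct_card inputs_adj)

lemma finite_inputs: "finite (inputs n)"
proof (rule finite_subset)
  let ?lists = "{xs. set xs \<subseteq> verts n \<and> distinct xs}"
  show "inputs n \<subseteq> Pow ({n div 6..<n} \<times> {n div 6..<n}) \<times>
      {adj. \<forall>v. (v \<in> verts n \<longrightarrow> adj v \<in> ?lists) \<and> (v \<notin> verts n \<longrightarrow> adj v = [])}"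
    using inputs_matching inputs_adj inputs_adj_Nil nbrs_subset_verts
    by (fastforce simp: perfect_matching_L2R2_def is_vert_iff)
  have "finite ?lists"
    by (rule finite_subset_distinct) (simp add: verts_def)
  then show "finite (Pow ({n div 6..<n} \<times> {n div 6..<n}) \<times>
      {adj. \<forall>v. (v \<in> verts n \<longrightarrow> adj v \<in> ?lists) \<and> (v \<notin> verts n \<longrightarrow> adj v = [])})"
    by (intro finite_cartesian_product finite_set_of_finite_funs) (simp_all add: verts_def)
qed

lemma inputs_nonempty: "inputs n \<noteq> {}"
proof -
  define M where "M = {(a, a) | a. n div 6 \<le> a \<and> a < n}"
  define adj where "adj v = (if is_vert n v then (SOME xs. set xs = nbrs n M v \<and> distinct xs) else [])" for v
  have "(M, adj) \<in> inputs n"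
  proof (rule inputsI)
    show "perfect_matching_L2R2 n M"
      by (auto simp: perfect_matching_L2R2_def M_def)
    show "distinct (adj v) \<and> set (adj v) = nbrs n M v" if "is_vert n v" for v
      using someI_ex[OF finite_distinct_list[OF finite_nbrs]] that by (auto simp: adj_def)
  qed (simp add: adj_def)
  then show ?thesis by blast
qed

context
  fixes n M assumes pm: "perfect_matching_L2R2 n M"
begin

lemma perfect_matching_L2R2_range:
  "(a, b) \<in> M \<Longrightarrow> n div 6 \<le> a \<and> a < n \<and> n div 6 \<le> b \<and> b < n"
  using pm by (auto simp: perfect_matching_L2R2_def)

lemma perfect_matching_L2R2_right_unique: "(a, b) \<in> M \<Longrightarrow> (a, b') \<in> M \<Longrightarrow> b = b'"
  using pm unfolding perfect_matching_L2R2_def by (metis (no_types, lifting) SigmaD1 subsetD)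

lemma perfect_matching_L2R2_left_unique: "(a, b) \<in> M \<Longrightarrow> (a', b) \<in> M \<Longrightarrow> a = a'"
  using pm unfolding perfect_matching_L2R2_def by (metis (no_types, lifting) SigmaD2 subsetD)

lemma finite_perfect_matching_L2R2: "finite M"
  using pm unfolding perfect_matching_L2R2_def by (meson finite_SigmaI finite_atLeastLessThan finite_subset)

lemma card_perfect_matching_L2R2: "card M = n - n div 6"
proof -
  have "inj_on fst M"
    by (rule inj_onI) (metis perfect_matching_L2R2_right_unique prod.collapse)
  moreover have "fst ` M = {n div 6..<n}"
  proof
    show "fst ` M \<subseteq> {n div 6..<n}"
      using perfect_matching_L2R2_range by force
    show "{n div 6..<n} \<subseteq> fst ` M"
      using pm unfolding perfect_matching_L2R2_def by (metis fst_conv image_eqI subsetI)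
  qed
  ultimately show ?thesis by (metis card_atLeastLessThan card_image)
qed

lemma inj_on_Inl_fst: "S \<subseteq> M \<Longrightarrow> inj_on (\<lambda>e. Inl (fst e) :: vert) S"
  by (rule inj_onI) (metis perfect_matching_L2R2_right_unique prod.collapse sum.inject(1) subsetD)

lemma inj_on_Inr_snd: "S \<subseteq> M \<Longrightarrow> inj_on (\<lambda>e. Inr (snd e) :: vert) S"
  by (rule inj_onI) (metis perfect_matching_L2R2_left_unique prod.collapse sum.inject(2) subsetD)

end

lemma finite_discovered: "x \<in> inputs n \<Longrightarrow> finite (discovered n alg x t)"
  using finite_perfect_matching_L2R2[OF inputs_matching]
  by (rule finite_subset[rotated]) (auto simp: discovered_def)

text \<open>An answer reveals an edge when it exhibits an edge of \<open>G\<close> between \<open>L\<^sub>2\<close> and \<open>R\<^sub>2\<close>; all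
  such edges lie in \<open>M\<close>. A discovered edge need not be revealed: it may be forced by non-edges.\<close>

fun revealed_by :: "nat \<Rightarrow> query \<times> answer \<Rightarrow> (nat \<times> nat) set" where
  "revealed_by n (Q1 (Inl i) p, A1 (Some (Inr j))) = (if n div 6 \<le> i \<and> n div 6 \<le> j then {(i, j)} else {})"
| "revealed_by n (Q1 (Inr j) p, A1 (Some (Inl i))) = (if n div 6 \<le> i \<and> n div 6 \<le> j then {(i, j)} else {})"
| "revealed_by n (Q2 (Inl i) (Inr j), A2 True) = (if n div 6 \<le> i \<and> n div 6 \<le> j then {(i, j)} else {})"
| "revealed_by n (Q2 (Inr j) (Inl i), A2 True) = (if n div 6 \<le> i \<and> n div 6 \<le> j then {(i, j)} else {})"
| "revealed_by n _ = {}"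

definition revealed :: "nat \<Rightarrow> (query \<times> answer) list \<Rightarrow> (nat \<times> nat) set" where
  "revealed n h = (\<Union>qa\<in>set h. revealed_by n qa)"

lemma revealed_by_subset_singleton: "\<exists>e. revealed_by n qa \<subseteq> {e}"
  by (induction n qa rule: revealed_by.induct) auto

lemma finite_revealed_by [simp]: "finite (revealed_by n qa)"
  using revealed_by_subset_singleton by (metis finite.emptyI finite_insert finite_subset)

lemma finite_revealed [simp]: "finite (revealed n h)"
  by (simp add: revealed_def)

lemma revealed_Nil [simp]: "revealed n [] = {}"
  by (simp add: revealed_def)

lemma revealed_snoc [simp]: "revealed n (h @ [qa]) = revealed n h \<union> revealed_by n qa"
  by (auto simp: revealed_def)

lemma revealed_by_query:
  assumes "e \<in> revealed_by n (q, a)"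
  shows "(\<exists>p. q = Q1 (Inl (fst e)) p) \<or> (\<exists>p. q = Q1 (Inr (snd e)) p) \<or>
    q = Q2 (Inl (fst e)) (Inr (snd e)) \<or> q = Q2 (Inr (snd e)) (Inl (fst e))"
  using assms by (induction n "(q, a)" rule: revealed_by.induct) (auto split: if_splits)

lemma revealed_by_Q1_Some: "revealed_by n (Q1 u p, A1 (Some v)) = revealed_by n (Q2 u v, A2 True)"
  by (cases u; cases v) simp_all

lemma revealed_by_edge_subset: "is_edge n M u v \<Longrightarrow> revealed_by n (Q2 u v, A2 True) \<subseteq> M"
  by (cases u; cases v) (auto simp: lr_edge_def)

lemma revealed_by_answer_subset:
  assumes x: "x \<in> inputs n"
  shows "revealed_by n (q, answer_of n x q) \<subseteq> fst x"
proof -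
  obtain M adj where x_eq: "x = (M, adj)" by fastforce
  show ?thesis
  proof (cases q)
    case (Q1 u p)
    show ?thesis
    proof (cases "p < length (adj u)")
      case True
      then have "is_vert n u"
        using inputs_adj_Nil[OF x] x_eq by force
      then have "adj u ! p \<in> nbrs n M u"
        using inputs_adj[OF x] x_eq True nth_mem by force
      then show ?thesis
        using Q1 True x_eq revealed_by_edge_subset by (simp add: revealed_by_Q1_Some nbrs_def)
    next
      case False
      then show ?thesis using Q1 x_eq by (cases u) simp_all
    qed
  next
    case (Q2 u v)
    then show ?thesis
      using revealed_by_edge_subset[of n M u v] x_eq
      by (cases u; cases v; cases "is_edge n M u v") simp_all
  qed
qed

lemma revealed_subset_matching: "x \<in> inputs n \<Longrightarrow> consistent n h x \<Longrightarrow> revealed n h \<subseteq> fst x"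
  using revealed_by_answer_subset unfolding revealed_def consistent_def by fastforce

definition nbr_queried :: "(query \<times> answer) list \<Rightarrow> vert \<Rightarrow> nat \<Rightarrow> bool" where
  "nbr_queried h v p \<longleftrightarrow> (\<exists>a. (Q1 v p, a) \<in> set h)"

definition pair_queried :: "(query \<times> answer) list \<Rightarrow> vert \<Rightarrow> vert \<Rightarrow> bool" where
  "pair_queried h u v \<longleftrightarrow> (\<exists>a. (Q2 u v, a) \<in> set h \<or> (Q2 v u, a) \<in> set h)"

definition nbr_queries :: "(query \<times> answer) list \<Rightarrow> vert \<Rightarrow> nat" where
  "nbr_queries h v = length (filter (\<lambda>qa. \<exists>p. fst qa = Q1 v p) h)"

definition pair_queries :: "(query \<times> answer) list \<Rightarrow> vert \<Rightarrow> nat" where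
  "pair_queries h v = length (filter (\<lambda>qa. \<exists>u. fst qa = Q2 v u \<or> fst qa = Q2 u v) h)"

lemma nbr_queries_append_mono: "nbr_queries h v \<le> nbr_queries (h @ h') v"
  by (simp add: nbr_queries_def)

lemma pair_queries_append_mono: "pair_queries h v \<le> pair_queries (h @ h') v"
  by (simp add: pair_queries_def)

lemma card_image_filter_le: "card (f ` {x \<in> set xs. P x}) \<le> length (filter P xs)"
  by (metis card_image_le card_length finite_set le_trans set_filter)

lemma sum_length_filter_le:
  assumes "\<And>x. card {w \<in> W. P w x} \<le> c"
  shows "(\<Sum>w\<in>W. length (filter (P w) xs)) \<le> c * length xs"
proof (cases "finite W")
  case True
  show ?thesis
  proof (induction xs)
    case (Cons x xs)
    have "(\<Sum>w\<in>W. length (filter (P w) (x # xs))) =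
        (\<Sum>w\<in>W. of_bool (P w x)) + (\<Sum>w\<in>W. length (filter (P w) xs))"
      by (auto simp: sum.distrib[symmetric] intro!: sum.cong)
    also have "(\<Sum>w\<in>W. of_bool (P w x)) = card {w \<in> W. P w x}"
      using True by (simp add: Collect_conj_eq Int_commute)
    finally show ?case
      using Cons.IH assms[of x] by simp
  qed simp
qed simp

lemma sum_nbr_queries_le: "(\<Sum>v\<in>W. nbr_queries h v) \<le> length h"
proof -
  have "card {w \<in> W. \<exists>p. fst qa = Q1 w p} \<le> 1" for qa :: "query \<times> answer"
    by (cases "fst qa") (auto intro: card_le_Suc0_iff_eq[THEN iffD2])
  then show ?thesis
    unfolding nbr_queries_def
    using sum_length_filter_le[of W "\<lambda>v qa. \<exists>p. fst qa = Q1 v p" 1 h] by simp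
qed

lemma sum_pair_queries_le: "(\<Sum>v\<in>W. pair_queries h v) \<le> 2 * length h"
proof -
  have "card {w \<in> W. \<exists>u. fst qa = Q2 w u \<or> fst qa = Q2 u w} \<le> 2" for qa :: "query \<times> answer"
  proof (cases "fst qa")
    case (Q2 u v)
    then have "{w \<in> W. \<exists>u. fst qa = Q2 w u \<or> fst qa = Q2 u w} \<subseteq> {u, v}"
      by (simp add: subset_iff) blast
    moreover have "card {u, v} \<le> 2"
      by (simp add: card_insert_if)
    ultimately show ?thesis
      by (meson card_mono finite.emptyI finite.insertI le_trans)
  qed simp
  then show ?thesis
    unfolding pair_queries_def
    using sum_length_filter_le[of W "\<lambda>v qa. \<exists>u. fst qa = Q2 v u \<or> fst qa = Q2 u v" 2 h] by simp
qed

lemma nbr_queried_subset: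
  "{p. nbr_queried h v p} \<subseteq> (\<lambda>qa. case fst qa of Q1 _ p \<Rightarrow> p | Q2 _ _ \<Rightarrow> 0) ` {qa \<in> set h. \<exists>p. fst qa = Q1 v p}"
  by (auto simp: nbr_queried_def intro: image_eqI[rotated])

lemma card_nbr_queried_le: "card {p. nbr_queried h v p} \<le> nbr_queries h v"
  unfolding nbr_queries_def
  by (rule le_trans[OF card_mono[OF _ nbr_queried_subset] card_image_filter_le]) simp

lemma pair_queried_subset:
  "{v. pair_queried h u v} \<subseteq> (\<lambda>qa. case fst qa of Q2 a b \<Rightarrow> if a = u then b else a | Q1 a _ \<Rightarrow> a) `
     {qa \<in> set h. \<exists>v. fst qa = Q2 u v \<or> fst qa = Q2 v u}"
proof
  fix v assume "v \<in> {v. pair_queried h u v}"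
  then obtain a where "(Q2 u v, a) \<in> set h \<or> (Q2 v u, a) \<in> set h"
    by (auto simp: pair_queried_def)
  then show "v \<in> (\<lambda>qa. case fst qa of Q2 a b \<Rightarrow> if a = u then b else a | Q1 a _ \<Rightarrow> a) `
      {qa \<in> set h. \<exists>v. fst qa = Q2 u v \<or> fst qa = Q2 v u}"
  proof
    assume "(Q2 u v, a) \<in> set h"
    then show ?thesis by (intro image_eqI[of _ _ "(Q2 u v, a)"]) auto
  next
    assume "(Q2 v u, a) \<in> set h"
    then show ?thesis by (intro image_eqI[of _ _ "(Q2 v u, a)"]) auto
  qed
qed

lemma finite_pair_queried: "finite {v. pair_queried h u v}"
  by (rule finite_subset[OF pair_queried_subset]) simp

lemma card_pair_queried_le: "card {v. pair_queried h u v} \<le> pair_queries h u"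
  unfolding pair_queries_def
  by (rule le_trans[OF card_mono[OF _ pair_queried_subset] card_image_filter_le]) simp

lemma pair_queried_commute: "pair_queried h u v \<longleftrightarrow> pair_queried h v u"
  unfolding pair_queried_def by blast

lemma card_unqueried_positions:
  "length xs \<le> card {p'. p' < length xs \<and> p' \<noteq> p \<and> \<not> nbr_queried h v p'} + 1 + nbr_queries h v"
proof -
  let ?W = "{p'. p' < length xs \<and> p' \<noteq> p \<and> \<not> nbr_queried h v p'}"
  have "{..<length xs} \<subseteq> ?W \<union> {p} \<union> {p. nbr_queried h v p}"
    by blast
  moreover have "finite {p. nbr_queried h v p}"
    by (rule finite_subset[OF nbr_queried_subset]) simp
  moreover have "finite ?W"
    by (rule finite_subset[of _ "{..<length xs}"]) auto
  ultimately have "length xs \<le> card (?W \<union> {p} \<union> {p. nbr_queried h v p})"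
    using card_mono[of "?W \<union> {p} \<union> {p. nbr_queried h v p}" "{..<length xs}"] by simp
  also have "\<dots> \<le> card ?W + 1 + card {p. nbr_queried h v p}"
    using card_Un_le[of "?W \<union> {p}" "{p. nbr_queried h v p}"] card_Un_le[of ?W "{p}"] by simp
  finally show ?thesis
    using card_nbr_queried_le[of h v] by linarith
qed

section \<open>Exchanging two edges of the matching\<close>

definition swap_matching :: "nat \<Rightarrow> nat \<Rightarrow> (nat \<times> nat) set \<Rightarrow> (nat \<times> nat) set" where
  "swap_matching j j' M = apsnd (transpose j j') ` M"

definition swap_vert :: "nat \<Rightarrow> nat \<Rightarrow> nat \<Rightarrow> nat \<Rightarrow> vert \<Rightarrow> vert" where
  "swap_vert i i' j j' = map_sum (transpose i i') (transpose j j')"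

text \<open>For \<open>(i, j), (i', j') \<in> M\<close> this trades them for \<open>(i, j'), (i', j)\<close>.\<close>

definition swap_input :: "nat \<Rightarrow> nat \<Rightarrow> nat \<Rightarrow> nat \<Rightarrow> input \<Rightarrow> input" where
  "swap_input i i' j j' x = (swap_matching j j' (fst x),
     \<lambda>v. if v \<in> {Inl i, Inl i', Inr j, Inr j'} then map (swap_vert i i' j j') (snd x v) else snd x v)"

lemma mem_swap_matching: "(a, b) \<in> swap_matching j j' M \<longleftrightarrow> (a, transpose j j' b) \<in> M"
proof
  assume "(a, b) \<in> swap_matching j j' M"
  then obtain d where "(a, d) \<in> M" "b = transpose j j' d"
    by (auto simp: swap_matching_def)
  then show "(a, transpose j j' b) \<in> M" by simp
next
  assume "(a, transpose j j' b) \<in> M"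
  then have "apsnd (transpose j j') (a, transpose j j' b) \<in> swap_matching j j' M"
    unfolding swap_matching_def by (rule imageI)
  then show "(a, b) \<in> swap_matching j j' M" by simp
qed

lemma swap_vert_involutory [simp]: "swap_vert i i' j j' (swap_vert i i' j j' v) = v"
  by (cases v) (simp_all add: swap_vert_def)

lemma image_swap_vert_iff: "u \<in> swap_vert i i' j j' ` A \<longleftrightarrow> swap_vert i i' j j' u \<in> A"
  by (rule iffI, force, rule image_eqI[where x = "swap_vert i i' j j' u"]) simp_all

lemma inj_swap_vert: "inj (swap_vert i i' j j')"
  by (metis injI swap_vert_involutory)

lemma swap_vert_other: "v \<notin> {Inl i, Inl i', Inr j, Inr j'} \<Longrightarrow> swap_vert i i' j j' v = v"
  by (cases v) (simp_all add: swap_vert_def)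

lemma swap_input_involutory: "swap_input i i' j j' (swap_input i i' j j' x) = x"
proof -
  have "swap_matching j j' (swap_matching j j' M) = M" for M
    by (auto simp: mem_swap_matching)
  then show ?thesis
    by (simp add: swap_input_def prod_eq_iff fun_eq_iff comp_def)
qed

lemma transpose_mem_iff: "(a \<in> S \<longleftrightarrow> b \<in> S) \<Longrightarrow> transpose a b c \<in> S \<longleftrightarrow> c \<in> S"
  by (auto simp: transpose_def)

lemma ex1_transpose_iff: "(\<exists>!b. P (transpose j j' b)) \<longleftrightarrow> (\<exists>!b. P b)"
  by (metis transpose_involutory)

lemma perfect_matching_L2R2_swap:
  assumes pm: "perfect_matching_L2R2 n M" and "j \<in> {n div 6..<n}" "j' \<in> {n div 6..<n}"
  shows "perfect_matching_L2R2 n (swap_matching j j' M)"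
proof -
  have range: "transpose j j' b \<in> {n div 6..<n} \<longleftrightarrow> b \<in> {n div 6..<n}" for b
    using assms(2,3) by (intro transpose_mem_iff) blast
  show ?thesis
    unfolding perfect_matching_L2R2_def mem_swap_matching ex1_transpose_iff[of "\<lambda>b. (_, b) \<in> M"]
    using pm range unfolding perfect_matching_L2R2_def by (auto simp: mem_swap_matching)
qed

locale matching_edge_pair =
  fixes n :: nat and x :: input and i i' j j' :: nat
  assumes input: "x \<in> inputs n"
    and edge: "(i, j) \<in> fst x" and edge': "(i', j') \<in> fst x" and left_ne: "i \<noteq> i'"
begin

abbreviation "\<sigma> \<equiv> swap_vert i i' j j'"
abbreviation "endpoints \<equiv> {Inl i, Inl i', Inr j, Inr j'}"

lemma matching: "perfect_matching_L2R2 n (fst x)"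
  using input by (rule inputs_matching)

lemma right_ne: "j \<noteq> j'"
  using perfect_matching_L2R2_left_unique[OF matching edge] edge' left_ne by blast

lemma ranges: "i \<in> {n div 6..<n}" "i' \<in> {n div 6..<n}" "j \<in> {n div 6..<n}" "j' \<in> {n div 6..<n}"
  using perfect_matching_L2R2_range[OF matching edge] perfect_matching_L2R2_range[OF matching edge']
  by auto

lemma partner_iff:
  "(i, b) \<in> fst x \<longleftrightarrow> b = j" "(i', b) \<in> fst x \<longleftrightarrow> b = j'"
  "(a, j) \<in> fst x \<longleftrightarrow> a = i" "(a, j') \<in> fst x \<longleftrightarrow> a = i'"
  using edge edge' perfect_matching_L2R2_right_unique[OF matching] perfect_matching_L2R2_left_unique[OF matching]
  by blast+

lemma matching_transpose_iff: "(transpose i i' a, transpose j j' b) \<in> fst x \<longleftrightarrow> (a, b) \<in> fst x"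
  using left_ne right_ne by (auto simp: transpose_def partner_iff)

lemma lr_edge_transpose:
  "lr_edge n (fst x) (transpose i i' a) (transpose j j' b) = lr_edge n (fst x) a b"
proof -
  have "transpose i i' a \<in> S \<longleftrightarrow> a \<in> S" "transpose j j' b \<in> S \<longleftrightarrow> b \<in> S"
    if "S = {..<n} \<or> S = {..<n div 6}" for S
    using that ranges by (auto intro!: transpose_mem_iff)
  then show ?thesis
    unfolding lr_edge_def matching_transpose_iff by (metis lessThan_iff)
qed

lemma lr_edge_swap: "lr_edge n (swap_matching j j' (fst x)) a b = lr_edge n (fst x) a (transpose j j' b)"
proof -
  have "transpose j j' b \<in> S \<longleftrightarrow> b \<in> S" if "S = {..<n} \<or> S = {..<n div 6}" for S
    using that ranges by (auto intro!: transpose_mem_iff)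
  then show ?thesis
    unfolding lr_edge_def mem_swap_matching by (metis lessThan_iff)
qed

text \<open>\<open>M\<close> is invariant under transposing \<open>i, i'\<close> and \<open>j, j'\<close> simultaneously, so exchanging the
  right endpoints alone amounts to relabelling either side of \<open>G\<close>.\<close>

lemma is_edge_swap_input:
  "is_edge n (fst (swap_input i i' j j' x)) u v = is_edge n (fst x) u (\<sigma> v)"
  "is_edge n (fst (swap_input i i' j j' x)) u v = is_edge n (fst x) (\<sigma> u) v"
  by (cases u; cases v; simp add: swap_input_def swap_vert_def lr_edge_swap
      flip: lr_edge_transpose[of "transpose i i' _"])+

lemma nbrs_swap_input: "nbrs n (fst (swap_input i i' j j' x)) v = \<sigma> ` nbrs n (fst x) v"
proof -
  have "u \<in> nbrs n (fst (swap_input i i' j j' x)) v \<longleftrightarrow> \<sigma> u \<in> nbrs n (fst x) v" for u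
    by (simp add: nbrs_def is_edge_swap_input(1))
  then show ?thesis
    by (simp add: set_eq_iff image_swap_vert_iff)
qed

lemma nbrs_swap_input_other:
  "v \<notin> endpoints \<Longrightarrow> nbrs n (fst (swap_input i i' j j' x)) v = nbrs n (fst x) v"
  by (simp add: nbrs_def is_edge_swap_input(2) swap_vert_other)

lemma swap_input_in_inputs: "swap_input i i' j j' x \<in> inputs n"
proof -
  have endpoints_verts: "is_vert n v" if "v \<in> endpoints" for v
    using that ranges by (auto simp: is_vert_def)
  have "swap_input i i' j j' x = (swap_matching j j' (fst x),
      \<lambda>v. if v \<in> endpoints then map \<sigma> (snd x v) else snd x v)"
    by (simp add: swap_input_def)
  also have "\<dots> \<in> inputs n"
  proof (rule inputsI)
    show "perfect_matching_L2R2 n (swap_matching j j' (fst x))"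
      using perfect_matching_L2R2_swap[OF matching] ranges by simp
    fix v
    show "distinct (if v \<in> endpoints then map \<sigma> (snd x v) else snd x v) \<and>
        set (if v \<in> endpoints then map \<sigma> (snd x v) else snd x v) = nbrs n (swap_matching j j' (fst x)) v"
      if "is_vert n v"
      using inputs_adj[OF input that] nbrs_swap_input[of v] nbrs_swap_input_other[of v]
        inj_swap_vert[of i i' j j'] by (simp add: swap_input_def distinct_map inj_on_subset)
    show "(if v \<in> endpoints then map \<sigma> (snd x v) else snd x v) = []" if "\<not> is_vert n v"
      using that endpoints_verts inputs_adj_Nil[OF input] by auto
  qed
  finally show ?thesis .
qed

lemma swap_input_edges:
  "(i, j) \<notin> fst (swap_input i i' j j' x)" "(i, j') \<in> fst (swap_input i i' j j' x)"
  "(i', j) \<in> fst (swap_input i i' j j' x)"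
  using left_ne right_ne by (simp_all add: swap_input_def mem_swap_matching partner_iff)

lemma edge_between_endpoints:
  assumes "u \<in> endpoints" "v \<in> endpoints" "is_edge n (fst x) u v"
  shows "revealed_by n (Q2 u v, A2 True) \<inter> {(i, j), (i', j')} \<noteq> {}"
  using assms ranges by (auto simp: lr_edge_def partner_iff)

lemma is_edge_swap_vert_endpoints:
  assumes "u \<in> endpoints" "v \<in> endpoints" "is_edge n (fst x) u (\<sigma> v)"
    and "(u, v) \<notin> {(Inl i, Inr j'), (Inr j', Inl i), (Inl i', Inr j), (Inr j, Inl i')}"
  shows "is_edge n (fst x) u v"
  using assms left_ne right_ne ranges by (auto simp: lr_edge_def partner_iff swap_vert_def)

lemma answer_swap_input_Q1:
  assumes "revealed_by n (Q1 v p, answer_of n x (Q1 v p)) \<inter> {(i, j), (i', j')} = {}"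
  shows "answer_of n (swap_input i i' j j' x) (Q1 v p) = answer_of n x (Q1 v p)"
proof (cases "v \<in> endpoints \<and> p < length (snd x v)")
  case True
  define w where "w = snd x v ! p"
  have "is_vert n v"
    using True inputs_adj_Nil[OF input] by force
  then have "is_edge n (fst x) v w"
    using inputs_adj[OF input] True nth_mem by (force simp: nbrs_def w_def)
  moreover have "revealed_by n (Q2 v w, A2 True) \<inter> {(i, j), (i', j')} = {}"
    using assms True by (simp add: w_def revealed_by_Q1_Some)
  ultimately have "w \<notin> endpoints"
    using True edge_between_endpoints by blast
  then show ?thesis
    using True by (simp add: swap_input_def swap_vert_other w_def)
next
  case False
  then show ?thesis by (auto simp: swap_input_def)
qed

lemma answer_swap_input_Q2:
  assumes "revealed_by n (Q2 u v, answer_of n x (Q2 u v)) \<inter> {(i, j), (i', j')} = {}"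
    and "(u, v) \<notin> {(Inl i, Inr j'), (Inr j', Inl i), (Inl i', Inr j), (Inr j, Inl i')}"
  shows "answer_of n (swap_input i i' j j' x) (Q2 u v) = answer_of n x (Q2 u v)"
proof (cases "u \<in> endpoints \<and> v \<in> endpoints")
  case True
  have "\<not> is_edge n (fst x) u v"
  proof
    assume edge_uv: "is_edge n (fst x) u v"
    with assms(1) have "revealed_by n (Q2 u v, A2 True) \<inter> {(i, j), (i', j')} = {}"
      by simp
    with True edge_uv show False
      using edge_between_endpoints by blast
  qed
  moreover have "\<not> is_edge n (fst x) u (\<sigma> v)"
    using True assms(2) calculation is_edge_swap_vert_endpoints by blast
  ultimately show ?thesis
    by (simp add: is_edge_swap_input(1))
next
  case False
  then consider "\<sigma> u = u" | "\<sigma> v = v"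
    using swap_vert_other by blast
  then show ?thesis
  proof cases
    case 1
    then show ?thesis using is_edge_swap_input(2)[of u v] by simp
  next
    case 2
    then show ?thesis using is_edge_swap_input(1)[of u v] by simp
  qed
qed

lemma consistent_swap_input:
  assumes "consistent n h x" "(i, j) \<notin> revealed n h" "(i', j') \<notin> revealed n h"
    and "\<not> pair_queried h (Inl i) (Inr j')" "\<not> pair_queried h (Inl i') (Inr j)"
  shows "consistent n h (swap_input i i' j j' x)"
  unfolding consistent_def
proof (clarify)
  fix q a assume qa: "(q, a) \<in> set h"
  then have a: "answer_of n x q = a"
    using assms(1) by (auto simp: consistent_def)
  have "revealed_by n (q, answer_of n x q) \<inter> {(i, j), (i', j')} = {}"
    using qa a assms(2,3) by (auto simp: revealed_def)
  moreover have "(u, v) \<notin> {(Inl i, Inr j'), (Inr j', Inl i), (Inl i', Inr j), (Inr j, Inl i')}"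
    if "q = Q2 u v" for u v
    using that qa assms(4,5) by (auto simp: pair_queried_def)
  ultimately show "answer_of n (swap_input i i' j j' x) q = a"
    using a answer_swap_input_Q1 answer_swap_input_Q2 by (cases q) blast+
qed

end

section \<open>Exchanging two positions of an adjacency list\<close>

definition swap_positions :: "vert \<Rightarrow> nat \<Rightarrow> nat \<Rightarrow> input \<Rightarrow> input" where
  "swap_positions v p p' x = (fst x, (snd x)(v := permute_list (transpose p p') (snd x v)))"

context
  fixes x :: input and v :: vert and p p' :: nat
  assumes positions: "p < length (snd x v)" "p' < length (snd x v)"
begin

lemma transpose_permutes_positions: "transpose p p' permutes {..<length (snd x v)}"
  using positions by (simp add: permutes_swap_id)

lemma swap_positions_in_inputs:
  assumes x: "x \<in> inputs n"
  shows "swap_positions v p p' x \<in> inputs n"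
  unfolding swap_positions_def
proof (rule inputsI)
  show "perfect_matching_L2R2 n (fst x)"
    using x by (rule inputs_matching)
  show "distinct (((snd x)(v := permute_list (transpose p p') (snd x v))) u) \<and>
      set (((snd x)(v := permute_list (transpose p p') (snd x v))) u) = nbrs n (fst x) u"
    if "is_vert n u" for u
    using inputs_adj[OF x that] transpose_permutes_positions by (cases "u = v") simp_all
  have "is_vert n v"
    using positions(1) inputs_adj_Nil[OF x, of v] by (cases "is_vert n v") simp_all
  then show "((snd x)(v := permute_list (transpose p p') (snd x v))) u = []"
    if "\<not> is_vert n u" for u
    using that inputs_adj_Nil[OF x] by (cases "u = v") simp_all
qed

lemma swap_positions_involutory: "swap_positions v p p' (swap_positions v p p' x) = x"
  using transpose_permutes_positions
  by (simp add: swap_positions_def prod_eq_iff permute_list_compose[symmetric])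

lemma swap_positions_nth: "snd (swap_positions v p p' x) v ! p' = snd x v ! p"
  using positions transpose_permutes_positions by (simp add: swap_positions_def permute_list_nth)

lemma consistent_swap_positions:
  assumes "consistent n h x" "\<not> nbr_queried h v p" "\<not> nbr_queried h v p'"
  shows "consistent n h (swap_positions v p p' x)"
  unfolding consistent_def
proof (clarify)
  fix q a assume qa: "(q, a) \<in> set h"
  then have "answer_of n x q = a"
    using assms(1) by (auto simp: consistent_def)
  moreover have "r \<noteq> p \<and> r \<noteq> p'" if "q = Q1 v r" for r
    using that qa assms(2,3) by (auto simp: nbr_queried_def)
  ultimately show "answer_of n (swap_positions v p p' x) q = a"
    using transpose_permutes_positions
    by (cases q) (auto simp: swap_positions_def permute_list_nth)
qed

end

section \<open>Counting by switching\<close>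

lemma card_mult_le_by_injection:
  assumes "finite B" "finite A"
    and "\<And>a. a \<in> A \<Longrightarrow> d \<le> card (W a)"
    and "\<And>a w. a \<in> A \<Longrightarrow> w \<in> W a \<Longrightarrow> f a w \<in> B"
    and "\<And>a w a' w'. a \<in> A \<Longrightarrow> w \<in> W a \<Longrightarrow> a' \<in> A \<Longrightarrow> w' \<in> W a' \<Longrightarrow> f a w = f a' w' \<Longrightarrow>
      a = a' \<and> w = w'"
  shows "card A * d \<le> card B"
proof (cases "d = 0")
  case False
  then have finite_W: "finite (W a)" if "a \<in> A" for a
    using assms(3)[OF that] by (metis card.infinite le_zero_eq)
  have "card A * d \<le> (\<Sum>a\<in>A. card (W a))"
    using assms(3) sum_mono[of A "\<lambda>_. d"] by (simp add: mult.commute)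
  also have "\<dots> = card (Sigma A W)"
    using assms(2) finite_W by (simp add: card_SigmaI)
  also have "\<dots> = card (case_prod f ` Sigma A W)"
    using assms(5) by (intro card_image[symmetric] inj_onI) auto
  also have "\<dots> \<le> card B"
    using assms(1,4) by (intro card_mono) auto
  finally show ?thesis .
qed simp

lemma card_mult_le_sum_endpoints:
  fixes c :: "'b \<Rightarrow> nat"
  assumes "finite S" "inj_on g S" "inj_on g' S" "\<And>e. e \<in> S \<Longrightarrow> m \<le> c (g e) + c (g' e)"
  shows "card S * m \<le> sum c (g ` S) + sum c (g' ` S)"
proof -
  have "card S * m \<le> (\<Sum>e\<in>S. c (g e) + c (g' e))"
    using assms(4) sum_mono[of S "\<lambda>_. m"] by (simp add: mult.commute)
  also have "\<dots> = sum c (g ` S) + sum c (g' ` S)"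
    by (simp add: sum.distrib sum.reindex[OF assms(2)] sum.reindex[OF assms(3)])
  finally show ?thesis .
qed

abbreviation next_query :: "nat \<Rightarrow> algorithm \<Rightarrow> input \<Rightarrow> nat \<Rightarrow> query" where
  "next_query n alg x s \<equiv> alg (history n alg x s)"

definition reveals_new :: "nat \<Rightarrow> algorithm \<Rightarrow> input \<Rightarrow> nat \<Rightarrow> bool" where
  "reveals_new n alg x s \<longleftrightarrow>
     \<not> revealed_by n (next_query n alg x s, answer_of n x (next_query n alg x s))
         \<subseteq> revealed n (history n alg x s)"

definition matched :: "(nat \<times> nat) set \<Rightarrow> vert \<Rightarrow> vert \<Rightarrow> bool" where
  "matched M u v \<longleftrightarrow> (\<exists>(i, j)\<in>M. (u = Inl i \<and> v = Inr j) \<or> (u = Inr j \<and> v = Inl i))"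

text \<open>\<open>(0, 0)\<close> is a junk value; only pair queries between \<open>L\<close> and \<open>R\<close> matter.\<close>

fun edge_of :: "query \<Rightarrow> nat \<times> nat" where
  "edge_of (Q2 (Inl i) (Inr j)) = (i, j)"
| "edge_of (Q2 (Inr j) (Inl i)) = (i, j)"
| "edge_of _ = (0, 0)"

lemma matched_unique: "perfect_matching_L2R2 n M \<Longrightarrow> matched M u v \<Longrightarrow> matched M u w \<Longrightarrow> v = w"
  unfolding matched_def
  using perfect_matching_L2R2_right_unique perfect_matching_L2R2_left_unique by fastforce

lemma length_adj_matched:
  assumes x: "x \<in> inputs n" and "matched (fst x) v w"
  shows "n div 6 + 1 \<le> length (snd x v)"
proof -
  obtain i j where e: "(i, j) \<in> fst x" "(v = Inl i \<and> w = Inr j) \<or> (v = Inr j \<and> w = Inl i)"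
    using assms(2) by (auto simp: matched_def)
  have range: "n div 6 \<le> i \<and> i < n \<and> n div 6 \<le> j \<and> j < n"
    using perfect_matching_L2R2_range[OF inputs_matching[OF x] e(1)] .
  then have "is_vert n v"
    using e(2) by (auto simp: is_vert_def)
  obtain N where N: "N \<subseteq> nbrs n (fst x) v" "card N = n div 6 + 1"
  proof (cases "v = Inl i")
    case True
    show ?thesis
      by (rule that[of "insert (Inr j) (Inr ` {..<n div 6})"])
        (use range e True in \<open>auto simp: nbrs_def lr_edge_def card_insert_if card_image\<close>)
  next
    case False
    show ?thesis
      by (rule that[of "insert (Inl i) (Inl ` {..<n div 6})"])
        (use range e False in \<open>auto simp: nbrs_def lr_edge_def card_insert_if card_image\<close>)
  qed
  then show ?thesis
    using card_mono[OF finite_nbrs N(1)] length_adj_eq_card_nbrs[OF x \<open>is_vert n v\<close>] by simp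
qed

lemma reveals_new_not_repeated:
  assumes "reveals_new n alg x s"
  shows "(next_query n alg x s, a) \<notin> set (history n alg x s)"
proof
  assume old: "(next_query n alg x s, a) \<in> set (history n alg x s)"
  then have "a = answer_of n x (next_query n alg x s)"
    using consistent_history[of n alg x s] by (auto simp: consistent_def)
  with old assms show False
    unfolding reveals_new_def revealed_def by blast
qed

lemma reveals_new_Q1:
  assumes x: "x \<in> inputs n" and new: "reveals_new n alg x s" and q: "next_query n alg x s = Q1 v p"
  shows "p < length (snd x v)" "\<not> nbr_queried (history n alg x s) v p" "matched (fst x) v (snd x v ! p)"
proof -
  obtain e where e: "e \<in> revealed_by n (Q1 v p, answer_of n x (Q1 v p))"
    using new q unfolding reveals_new_def by auto
  then show "p < length (snd x v)"
    by (cases v) (auto split: if_splits)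
  with e show "matched (fst x) v (snd x v ! p)"
    using revealed_by_answer_subset[OF x, of "Q1 v p"]
    by (cases v; cases "snd x v ! p") (auto simp: matched_def split: if_splits)
  show "\<not> nbr_queried (history n alg x s) v p"
    using reveals_new_not_repeated[OF new] q by (auto simp: nbr_queried_def)
qed

lemma reveals_new_Q2:
  assumes x: "x \<in> inputs n" and new: "reveals_new n alg x s" and q: "next_query n alg x s = Q2 u w"
  shows "edge_of (Q2 u w) \<in> fst x - revealed n (history n alg x s)"
    "(u, w) = (Inl (fst (edge_of (Q2 u w))), Inr (snd (edge_of (Q2 u w)))) \<or>
     (u, w) = (Inr (snd (edge_of (Q2 u w))), Inl (fst (edge_of (Q2 u w))))"
proof -
  obtain e where e: "e \<in> revealed_by n (Q2 u w, answer_of n x (Q2 u w))"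
    "e \<notin> revealed n (history n alg x s)"
    using new q unfolding reveals_new_def by auto
  have uw: "(u, w) = (Inl (fst e), Inr (snd e)) \<or> (u, w) = (Inr (snd e), Inl (fst e))"
    using revealed_by_query[OF e(1)] by auto
  then have "edge_of (Q2 u w) = e"
    by auto
  then show "edge_of (Q2 u w) \<in> fst x - revealed n (history n alg x s)"
    "(u, w) = (Inl (fst (edge_of (Q2 u w))), Inr (snd (edge_of (Q2 u w)))) \<or>
     (u, w) = (Inr (snd (edge_of (Q2 u w))), Inl (fst (edge_of (Q2 u w))))"
    using e revealed_by_answer_subset[OF x, of "Q2 u w"] uw by auto
qed

section \<open>Edges discovered without being revealed\<close>

text \<open>The edges \<open>e \<in> M\<close> that can be exchanged with \<open>(i, j) \<in> M\<close> without changing any answer in \<open>h\<close>.\<close>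

definition swap_partners ::
  "nat \<Rightarrow> (query \<times> answer) list \<Rightarrow> (nat \<times> nat) set \<Rightarrow> nat \<Rightarrow> nat \<Rightarrow> (nat \<times> nat) set" where
  "swap_partners n h M i j = {e \<in> M. fst e \<noteq> i \<and> e \<notin> revealed n h \<and>
     \<not> pair_queried h (Inl i) (Inr (snd e)) \<and> \<not> pair_queried h (Inl (fst e)) (Inr j)}"

lemma card_pair_queried_matching:
  assumes pm: "perfect_matching_L2R2 n M"
  shows "card {e \<in> M. pair_queried h u (Inr (snd e))} \<le> pair_queries h u"
    "card {e \<in> M. pair_queried h (Inl (fst e)) w} \<le> pair_queries h w"
proof -
  let ?B = "{e \<in> M. pair_queried h u (Inr (snd e))}"
  have "inj_on (\<lambda>e. Inr (snd e) :: vert) ?B"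
    by (rule inj_on_Inr_snd[OF pm]) blast
  then have "card ?B = card ((\<lambda>e. Inr (snd e) :: vert) ` ?B)"
    by (rule card_image[symmetric])
  also have "\<dots> \<le> card {v. pair_queried h u v}"
    by (rule card_mono[OF finite_pair_queried]) blast
  finally show "card ?B \<le> pair_queries h u"
    using card_pair_queried_le by (rule le_trans)
next
  let ?B = "{e \<in> M. pair_queried h (Inl (fst e)) w}"
  have "inj_on (\<lambda>e. Inl (fst e) :: vert) ?B"
    by (rule inj_on_Inl_fst[OF pm]) blast
  then have "card ?B = card ((\<lambda>e. Inl (fst e) :: vert) ` ?B)"
    by (rule card_image[symmetric])
  also have "\<dots> \<le> card {v. pair_queried h w v}"
    by (rule card_mono[OF finite_pair_queried]) (blast intro: pair_queried_commute[THEN iffD1])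
  finally show "card ?B \<le> pair_queries h w"
    using card_pair_queried_le by (rule le_trans)
qed

lemma card_swap_partners:
  assumes pm: "perfect_matching_L2R2 n M" and ij: "(i, j) \<in> M"
  shows "card M \<le> card (swap_partners n h M i j) + 1 + card (revealed n h) +
    pair_queries h (Inl i) + pair_queries h (Inr j)"
proof -
  define B where "B = {e \<in> M. pair_queried h (Inl i) (Inr (snd e))}"
  define B' where "B' = {e \<in> M. pair_queried h (Inl (fst e)) (Inr j)}"
  have finite: "finite (swap_partners n h M i j)" "finite B" "finite B'"
    using finite_perfect_matching_L2R2[OF pm] by (auto simp: swap_partners_def B_def B'_def)
  have "M \<subseteq> swap_partners n h M i j \<union> {(i, j)} \<union> revealed n h \<union> B \<union> B'"
    using perfect_matching_L2R2_right_unique[OF pm ij]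
    by (auto simp: swap_partners_def B_def B'_def)
  then have "card M \<le> card (swap_partners n h M i j \<union> {(i, j)} \<union> revealed n h \<union> B \<union> B')"
    using finite by (intro card_mono) auto
  also have "\<dots> \<le> card (swap_partners n h M i j) + 1 + card (revealed n h) + card B + card B'"
    using card_Un_le[of "swap_partners n h M i j \<union> {(i, j)} \<union> revealed n h \<union> B" B']
      card_Un_le[of "swap_partners n h M i j \<union> {(i, j)} \<union> revealed n h" B]
      card_Un_le[of "swap_partners n h M i j \<union> {(i, j)}" "revealed n h"]
      card_Un_le[of "swap_partners n h M i j" "{(i, j)}"] by simp
  finally show ?thesis
    using card_pair_queried_matching(1)[OF pm, of h "Inl i"] card_pair_queried_matching(2)[OF pm, of h "Inr j"]
    unfolding B_def B'_def by linarith
qed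

lemma swap_with_partner:
  assumes x: "x \<in> inputs n" and h: "consistent n h x"
    and ij: "(i, j) \<in> fst x" "(i, j) \<notin> revealed n h" and e: "e \<in> swap_partners n h (fst x) i j"
  defines "y \<equiv> swap_input i (fst e) j (snd e) x"
  shows "y \<in> inputs n" "consistent n h y" "(i, j) \<notin> fst y" "(i, snd e) \<in> fst y" "(fst e, j) \<in> fst y"
proof -
  interpret matching_edge_pair n x i "fst e" j "snd e"
    using x ij e by unfold_locales (auto simp: swap_partners_def)
  show "y \<in> inputs n"
    unfolding y_def by (rule swap_input_in_inputs)
  show "consistent n h y"
    unfolding y_def using h ij e by (intro consistent_swap_input) (auto simp: swap_partners_def)
  show "(i, j) \<notin> fst y" "(i, snd e) \<in> fst y" "(fst e, j) \<in> fst y"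
    unfolding y_def using swap_input_edges by simp_all
qed

lemma card_matching_le_if_discovered_unrevealed:
  assumes x: "x \<in> inputs n" and disc: "(i, j) \<in> discovered n alg x t"
    and unrev: "(i, j) \<notin> revealed n (history n alg x t)"
  defines "h \<equiv> history n alg x t"
  shows "card (fst x) \<le> 1 + card (revealed n h) + pair_queries h (Inl i) + pair_queries h (Inr j)"
proof -
  have ij: "(i, j) \<in> fst x"
    using disc by (simp add: discovered_def)
  have "swap_partners n h (fst x) i j = {}"
  proof (rule ccontr)
    assume "swap_partners n h (fst x) i j \<noteq> {}"
    then obtain e where "e \<in> swap_partners n h (fst x) i j"
      by blast
    from swap_with_partner[OF x _ ij _ this] consistent_history unrev disc show False
      unfolding h_def discovered_def by blast
  qed
  then show ?thesis
    using card_swap_partners[OF inputs_matching[OF x] ij, of h] by simp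
qed

lemma card_discovered_unrevealed:
  fixes alg :: algorithm and t :: nat
  assumes x: "x \<in> inputs n"
  defines "h \<equiv> history n alg x t"
  shows "card (discovered n alg x t - revealed n h) * (card (fst x) - 1 - card (revealed n h)) \<le> 4 * t"
proof -
  let ?D = "discovered n alg x t - revealed n h"
  have "?D \<subseteq> fst x"
    by (auto simp: discovered_def)
  moreover have "finite ?D"
    using finite_discovered[OF x] by simp
  moreover have "card (fst x) - 1 - card (revealed n h) \<le>
      pair_queries h (Inl (fst e)) + pair_queries h (Inr (snd e))" if "e \<in> ?D" for e
  proof -
    have "card (fst x) \<le> 1 + card (revealed n h) + pair_queries h (Inl (fst e)) + pair_queries h (Inr (snd e))"
      using card_matching_le_if_discovered_unrevealed[OF x, of "fst e" "snd e" alg t] that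
      by (simp add: h_def)
    then show ?thesis by linarith
  qed
  ultimately have "card ?D * (card (fst x) - 1 - card (revealed n h)) \<le>
      sum (pair_queries h) ((\<lambda>e. Inl (fst e)) ` ?D) + sum (pair_queries h) ((\<lambda>e. Inr (snd e)) ` ?D)"
    using inj_on_Inl_fst[OF inputs_matching[OF x]] inj_on_Inr_snd[OF inputs_matching[OF x]]
    by (intro card_mult_le_sum_endpoints) auto
  moreover have "sum (pair_queries h) ((\<lambda>e. Inl (fst e)) ` ?D) \<le> 2 * t"
    "sum (pair_queries h) ((\<lambda>e. Inr (snd e)) ` ?D) \<le> 2 * t"
    using sum_pair_queries_le[of h] by (simp_all add: h_def)
  ultimately show ?thesis by linarith
qed

section \<open>Cheap revealing queries are rare\<close>

definition cheap_nbr_step :: "nat \<Rightarrow> algorithm \<Rightarrow> input \<Rightarrow> nat \<Rightarrow> bool" where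
  "cheap_nbr_step n alg x s \<longleftrightarrow> reveals_new n alg x s \<and>
     (\<exists>v p. next_query n alg x s = Q1 v p \<and> 2 * nbr_queries (history n alg x s) v \<le> n div 6)"

definition cheap_pair_step :: "nat \<Rightarrow> algorithm \<Rightarrow> input \<Rightarrow> nat \<Rightarrow> bool" where
  "cheap_pair_step n alg x s \<longleftrightarrow> reveals_new n alg x s \<and>
     (\<exists>u w. next_query n alg x s = Q2 u w \<and>
        pair_queries (history n alg x s) u + pair_queries (history n alg x s) w \<le> n div 6 \<and>
        card (revealed n (history n alg x s)) \<le> n div 6)"

definition cheap_step :: "nat \<Rightarrow> algorithm \<Rightarrow> input \<Rightarrow> nat \<Rightarrow> bool" where
  "cheap_step n alg x s \<longleftrightarrow> cheap_nbr_step n alg x s \<or> cheap_pair_step n alg x s"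

lemma next_query_eq_if_consistent:
  "consistent n (history n alg x s) y \<Longrightarrow> next_query n alg y s = next_query n alg x s"
  by (simp add: history_eq_if_consistent)

lemma cheap_nbr_stepE:
  assumes "x \<in> inputs n" "cheap_nbr_step n alg x s"
  obtains v p where "next_query n alg x s = Q1 v p" "2 * nbr_queries (history n alg x s) v \<le> n div 6"
    "p < length (snd x v)" "\<not> nbr_queried (history n alg x s) v p" "matched (fst x) v (snd x v ! p)"
  using assms reveals_new_Q1 unfolding cheap_nbr_step_def by metis

lemma cheap_pair_stepE:
  assumes x: "x \<in> inputs n" and cheap: "cheap_pair_step n alg x s"
  obtains i j where "edge_of (next_query n alg x s) = (i, j)" "(i, j) \<in> fst x"
    "(i, j) \<notin> revealed n (history n alg x s)"
    "pair_queries (history n alg x s) (Inl i) + pair_queries (history n alg x s) (Inr j) \<le> n div 6"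
    "card (revealed n (history n alg x s)) \<le> n div 6"
proof -
  obtain u w where q: "next_query n alg x s = Q2 u w" and new: "reveals_new n alg x s"
    and few: "pair_queries (history n alg x s) u + pair_queries (history n alg x s) w \<le> n div 6"
      "card (revealed n (history n alg x s)) \<le> n div 6"
    using cheap unfolding cheap_pair_step_def by blast
  obtain i j where ij: "edge_of (Q2 u w) = (i, j)"
    by fastforce
  show ?thesis
  proof (rule that[of i j])
    show "(i, j) \<in> fst x" "(i, j) \<notin> revealed n (history n alg x s)"
      using reveals_new_Q2(1)[OF x new q] ij by simp_all
    show "pair_queries (history n alg x s) (Inl i) + pair_queries (history n alg x s) (Inr j) \<le> n div 6"
      using reveals_new_Q2(2)[OF x new q] ij few(1) by auto
  qed (use q ij few(2) in simp_all)
qed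

lemma swap_positions_inj:
  assumes x: "x \<in> inputs n" "matched (fst x) v (snd x v ! p)" "p < length (snd x v)" "p1 < length (snd x v)"
    and x': "x' \<in> inputs n" "matched (fst x') v (snd x' v ! p)" "p < length (snd x' v)" "p2 < length (snd x' v)"
    and eq: "swap_positions v p p1 x = swap_positions v p p2 x'"
  shows "x = x' \<and> p1 = p2"
proof -
  define y where "y = swap_positions v p p1 x"
  have y: "y \<in> inputs n"
    unfolding y_def using x by (intro swap_positions_in_inputs)
  have same_matching: "fst x' = fst x" and same_length: "length (snd x' v) = length (snd x v)"
    using arg_cong[OF eq, of fst] arg_cong[OF eq, of "\<lambda>y. length (snd y v)"]
    by (simp_all add: swap_positions_def)
  have "snd x v ! p = snd x' v ! p"
    using matched_unique[OF inputs_matching[OF x(1)] x(2)] x'(2) same_matching by simp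
  then have "snd y v ! p1 = snd y v ! p2"
    using swap_positions_nth[OF x(3,4)] swap_positions_nth[OF x'(3,4)] eq by (simp add: y_def)
  moreover have "is_vert n v"
    using x(3) inputs_adj_Nil[OF x(1), of v] by (cases "is_vert n v") simp_all
  then have "distinct (snd y v)"
    using inputs_adj[OF y] by blast
  moreover have "length (snd y v) = length (snd x v)"
    by (simp add: y_def swap_positions_def)
  ultimately have "p1 = p2"
    using x(4) x'(4) same_length by (simp add: nth_eq_iff_index_eq)
  with eq show ?thesis
    using swap_positions_involutory[OF x(3,4)] swap_positions_involutory[OF x'(3,4)] by metis
qed

lemma swap_input_inj:
  assumes x: "x \<in> inputs n" "(i, j) \<in> fst x" "e \<in> fst x" "fst e \<noteq> i"
    and x': "x' \<in> inputs n" "(i, j) \<in> fst x'" "e' \<in> fst x'" "fst e' \<noteq> i"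
    and eq: "swap_input i (fst e) j (snd e) x = swap_input i (fst e') j (snd e') x'"
  shows "x = x' \<and> e = e'"
proof -
  interpret ex: matching_edge_pair n x i "fst e" j "snd e"
    using x by unfold_locales simp_all
  interpret ex': matching_edge_pair n x' i "fst e'" j "snd e'"
    using x' by unfold_locales simp_all
  define y where "y = swap_input i (fst e) j (snd e) x"
  have pm: "perfect_matching_L2R2 n (fst y)"
    unfolding y_def using ex.swap_input_in_inputs by (rule inputs_matching)
  have "snd e = snd e'"
    using ex.swap_input_edges(2) ex'.swap_input_edges(2) eq
    by (intro perfect_matching_L2R2_right_unique[OF pm, of i]) (simp_all add: y_def)
  moreover have "fst e = fst e'"
    using ex.swap_input_edges(3) ex'.swap_input_edges(3) eq
    by (intro perfect_matching_L2R2_left_unique[OF pm, of _ j]) (simp_all add: y_def)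
  ultimately show ?thesis
    using eq swap_input_involutory by (metis prod.expand)
qed

text \<open>A cheap neighbour query at \<open>v\<close> leaves at least \<open>n/12\<close> unprobed positions of the list
  of \<open>v\<close>; moving the matching partner of \<open>v\<close> to any of them gives an input with the same history.\<close>

lemma card_cheap_nbr_steps:
  "card {x \<in> inputs n. cheap_nbr_step n alg x s} * (n div 6 - n div 6 div 2) \<le> card (inputs n)"
proof -
  let ?h = "\<lambda>x. history n alg x s"
  define W where "W x = (case next_query n alg x s of
      Q1 v p \<Rightarrow> {p'. p' < length (snd x v) \<and> p' \<noteq> p \<and> \<not> nbr_queried (?h x) v p'} | Q2 _ _ \<Rightarrow> {})" for x
  define f where "f x p' = (case next_query n alg x s of
      Q1 v p \<Rightarrow> swap_positions v p p' x | Q2 _ _ \<Rightarrow> x)" for x p'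
  have swapped: "f x p' \<in> inputs n" "next_query n alg (f x p') s = next_query n alg x s"
    if x: "x \<in> inputs n" and cheap: "cheap_nbr_step n alg x s" and W: "p' \<in> W x" for x p'
  proof -
    obtain v p where q: "next_query n alg x s = Q1 v p"
      and p: "p < length (snd x v)" "\<not> nbr_queried (?h x) v p"
      using cheap_nbr_stepE[OF x cheap] by blast
    have p': "p' < length (snd x v)" "\<not> nbr_queried (?h x) v p'"
      using W q by (simp_all add: W_def)
    have "f x p' = swap_positions v p p' x"
      using q by (simp add: f_def)
    then show "f x p' \<in> inputs n" "next_query n alg (f x p') s = next_query n alg x s"
      using swap_positions_in_inputs[OF p(1) p'(1) x] next_query_eq_if_consistent
        consistent_swap_positions[OF p(1) p'(1) consistent_history p(2) p'(2)] by simp_all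
  qed
  show ?thesis
  proof (rule card_mult_le_by_injection[OF finite_inputs, where W = W and f = f])
    fix x assume "x \<in> {x \<in> inputs n. cheap_nbr_step n alg x s}"
    then obtain v p where x: "x \<in> inputs n" "next_query n alg x s = Q1 v p"
      "2 * nbr_queries (?h x) v \<le> n div 6" "matched (fst x) v (snd x v ! p)"
      using cheap_nbr_stepE by blast
    show "n div 6 - n div 6 div 2 \<le> card (W x)"
      using card_unqueried_positions[of "snd x v" p "?h x" v] length_adj_matched[OF x(1,4)] x(2,3)
      by (simp add: W_def)
  next
    fix x p' assume "x \<in> {x \<in> inputs n. cheap_nbr_step n alg x s}" "p' \<in> W x"
    then show "f x p' \<in> inputs n"
      using swapped(1) by (auto simp: W_def split: query.splits)
  next
    fix x p1 x' p2
    assume A: "x \<in> {x \<in> inputs n. cheap_nbr_step n alg x s}" "x' \<in> {x \<in> inputs n. cheap_nbr_step n alg x s}"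
      and W: "p1 \<in> W x" "p2 \<in> W x'" and eq: "f x p1 = f x' p2"
    obtain v p where x: "next_query n alg x s = Q1 v p" "p < length (snd x v)" "matched (fst x) v (snd x v ! p)"
      using A(1) cheap_nbr_stepE by blast
    obtain v' p' where x': "next_query n alg x' s = Q1 v' p'" "p' < length (snd x' v')"
      "matched (fst x') v' (snd x' v' ! p')"
      using A(2) cheap_nbr_stepE by blast
    have "Q1 v p = Q1 v' p'"
      using swapped(2)[of x p1] swapped(2)[of x' p2] A W x(1) x'(1) eq by simp
    then have "v' = v" "p' = p" by simp_all
    then show "x = x' \<and> p1 = p2"
      using A W x x' eq by (intro swap_positions_inj[of x n v p p1 x' p2]) (auto simp: W_def f_def)
  qed (simp add: finite_inputs)
qed

text \<open>A cheap pair query on a matching edge \<open>(i, j)\<close> leaves at least \<open>n/6\<close> other edges \<open>e\<close> of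
  \<open>M\<close> that can be exchanged with it without changing the history.\<close>

lemma card_cheap_pair_steps:
  "card {x \<in> inputs n. cheap_pair_step n alg x s} * (n div 6) \<le> card (inputs n)"
proof -
  let ?h = "\<lambda>x. history n alg x s"
  let ?e = "\<lambda>x. edge_of (next_query n alg x s)"
  define W where "W x = swap_partners n (?h x) (fst x) (fst (?e x)) (snd (?e x))" for x
  define f where "f x e = swap_input (fst (?e x)) (fst e) (snd (?e x)) (snd e) x" for x e
  have swapped: "f x e \<in> inputs n" "next_query n alg (f x e) s = next_query n alg x s"
    if x: "x \<in> inputs n" and cheap: "cheap_pair_step n alg x s" and W: "e \<in> W x" for x e
  proof -
    obtain i j where ij: "?e x = (i, j)" "(i, j) \<in> fst x" "(i, j) \<notin> revealed n (?h x)"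
      using cheap_pair_stepE[OF x cheap] by blast
    have "e \<in> swap_partners n (?h x) (fst x) i j" "f x e = swap_input i (fst e) j (snd e) x"
      using W ij(1) by (simp_all add: W_def f_def)
    from swap_with_partner(1,2)[OF x consistent_history ij(2,3) this(1)] this(2)
    show "f x e \<in> inputs n" "next_query n alg (f x e) s = next_query n alg x s"
      using next_query_eq_if_consistent by simp_all
  qed
  show ?thesis
  proof (rule card_mult_le_by_injection[OF finite_inputs, where W = W and f = f])
    fix x assume "x \<in> {x \<in> inputs n. cheap_pair_step n alg x s}"
    then obtain i j where x: "x \<in> inputs n" "?e x = (i, j)" "(i, j) \<in> fst x"
      "pair_queries (?h x) (Inl i) + pair_queries (?h x) (Inr j) \<le> n div 6"
      "card (revealed n (?h x)) \<le> n div 6"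
      using cheap_pair_stepE by blast
    have "card (fst x) = n - n div 6"
      using card_perfect_matching_L2R2[OF inputs_matching[OF x(1)]] .
    then show "n div 6 \<le> card (W x)"
      using card_swap_partners[OF inputs_matching[OF x(1)] x(3), of "?h x"] x(2,4,5)
      by (simp add: W_def)
  next
    fix x e assume "x \<in> {x \<in> inputs n. cheap_pair_step n alg x s}" "e \<in> W x"
    then show "f x e \<in> inputs n"
      using swapped(1) by blast
  next
    fix x e x' e'
    assume A: "x \<in> {x \<in> inputs n. cheap_pair_step n alg x s}" "x' \<in> {x \<in> inputs n. cheap_pair_step n alg x s}"
      and W: "e \<in> W x" "e' \<in> W x'" and eq: "f x e = f x' e'"
    have same_edge: "?e x' = ?e x"
      using swapped(2)[of x e] swapped(2)[of x' e'] A W eq by simp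
    have "x \<in> inputs n" "cheap_pair_step n alg x s" "x' \<in> inputs n" "cheap_pair_step n alg x' s"
      using A by simp_all
    then obtain i j i' j' where "?e x = (i, j)" "(i, j) \<in> fst x" "?e x' = (i', j')" "(i', j') \<in> fst x'"
      by (metis cheap_pair_stepE)
    with same_edge show "x = x' \<and> e = e'"
      using A W eq by (intro swap_input_inj[of x n i j e x' e']) (auto simp: W_def f_def swap_partners_def)
  qed (simp add: finite_inputs)
qed

lemma card_cheap_steps: "card {x \<in> inputs n. cheap_step n alg x s} * (n div 6) \<le> 3 * card (inputs n)"
proof -
  let ?A = "{x \<in> inputs n. cheap_step n alg x s}"
  let ?A1 = "{x \<in> inputs n. cheap_nbr_step n alg x s}" and ?A2 = "{x \<in> inputs n. cheap_pair_step n alg x s}"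
  have "?A = ?A1 \<union> ?A2"
    by (auto simp: cheap_step_def)
  then have "card ?A \<le> card ?A1 + card ?A2"
    by (simp add: card_Un_le)
  then have "card ?A * (n div 6) \<le> (card ?A1 + card ?A2) * (n div 6)"
    by (rule mult_le_mono1)
  moreover have "card ?A1 * (n div 6) \<le> 2 * (card ?A1 * (n div 6 - n div 6 div 2))"
  proof -
    have "n div 6 \<le> 2 * (n div 6 - n div 6 div 2)"
      using div_times_less_eq_dividend[of "n div 6" 2] by linarith
    from mult_le_mono2[OF this, of "card ?A1"] show ?thesis
      by (simp add: mult.left_commute)
  qed
  ultimately show ?thesis
    using card_cheap_nbr_steps[of n alg s] card_cheap_pair_steps[of n alg s]
    unfolding add_mult_distrib by linarith
qed

definition heavy_revealed :: "nat \<Rightarrow> (query \<times> answer) list \<Rightarrow> (nat \<times> nat) set" where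
  "heavy_revealed n h = {e \<in> revealed n h.
     n div 6 < 2 * nbr_queries h (Inl (fst e)) \<or> n div 6 < 2 * nbr_queries h (Inr (snd e)) \<or>
     n div 6 < pair_queries h (Inl (fst e)) + pair_queries h (Inr (snd e))}"

definition cheap_steps :: "nat \<Rightarrow> algorithm \<Rightarrow> input \<Rightarrow> nat \<Rightarrow> nat" where
  "cheap_steps n alg x t = card {s. s < t \<and> cheap_step n alg x s}"

lemma cheap_steps_Suc:
  "cheap_steps n alg x (Suc t) = cheap_steps n alg x t + of_bool (cheap_step n alg x t)"
proof -
  have "{s. s < Suc t \<and> cheap_step n alg x s} =
      {s. s < t \<and> cheap_step n alg x s} \<union> (if cheap_step n alg x t then {t} else {})"
    by (auto simp: less_Suc_eq)
  then show ?thesis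
    by (simp add: cheap_steps_def)
qed

lemma finite_heavy_revealed [simp]: "finite (heavy_revealed n h)"
  by (simp add: heavy_revealed_def)

lemma heavy_revealed_mono: "heavy_revealed n h \<subseteq> heavy_revealed n (h @ h')"
  using nbr_queries_append_mono[of h _ h'] pair_queries_append_mono[of h _ h']
  by (fastforce simp: heavy_revealed_def revealed_def intro: less_le_trans add_mono)

lemma card_heavy_revealed:
  assumes x: "x \<in> inputs n" and h: "consistent n h x"
  shows "card (heavy_revealed n h) * (n div 6 + 1) \<le> 8 * length h"
proof -
  let ?k = "n div 6" and ?L = "\<lambda>e. Inl (fst e) :: vert" and ?R = "\<lambda>e. Inr (snd e) :: vert"
  define E1 where "E1 = {e \<in> revealed n h. ?k < 2 * nbr_queries h (Inl (fst e))}"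
  define E2 where "E2 = {e \<in> revealed n h. ?k < 2 * nbr_queries h (Inr (snd e))}"
  define E3 where "E3 = {e \<in> revealed n h. ?k < pair_queries h (Inl (fst e)) + pair_queries h (Inr (snd e))}"
  have sub: "E1 \<subseteq> fst x" "E2 \<subseteq> fst x" "E3 \<subseteq> fst x"
    using revealed_subset_matching[OF x h] by (auto simp: E1_def E2_def E3_def)
  note inj = inj_on_Inl_fst[OF inputs_matching[OF x]] inj_on_Inr_snd[OF inputs_matching[OF x]]
  have "card E1 * (?k + 1) \<le> sum (nbr_queries h) (?L ` E1) + sum (nbr_queries h) (?L ` E1)"
    using sub(1) inj by (intro card_mult_le_sum_endpoints) (auto simp: E1_def)
  then have E1: "card E1 * (?k + 1) \<le> 2 * length h"
    using sum_nbr_queries_le[of h "?L ` E1"] by linarith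
  have "card E2 * (?k + 1) \<le> sum (nbr_queries h) (?R ` E2) + sum (nbr_queries h) (?R ` E2)"
    using sub(2) inj by (intro card_mult_le_sum_endpoints) (auto simp: E2_def)
  then have E2: "card E2 * (?k + 1) \<le> 2 * length h"
    using sum_nbr_queries_le[of h "?R ` E2"] by linarith
  have "card E3 * (?k + 1) \<le> sum (pair_queries h) (?L ` E3) + sum (pair_queries h) (?R ` E3)"
    using sub(3) inj by (intro card_mult_le_sum_endpoints) (auto simp: E3_def)
  then have E3: "card E3 * (?k + 1) \<le> 4 * length h"
    using sum_pair_queries_le[of h "?L ` E3"] sum_pair_queries_le[of h "?R ` E3"] by linarith
  have "heavy_revealed n h = E1 \<union> E2 \<union> E3"
    by (auto simp: heavy_revealed_def E1_def E2_def E3_def)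
  then have "card (heavy_revealed n h) \<le> card E1 + card E2 + card E3"
    using card_Un_le[of "E1 \<union> E2" E3] card_Un_le[of E1 E2] by simp
  then have "card (heavy_revealed n h) * (?k + 1) \<le> (card E1 + card E2 + card E3) * (?k + 1)"
    by (rule mult_le_mono1)
  with E1 E2 E3 show ?thesis
    unfolding add_mult_distrib by linarith
qed

lemma new_revealed_heavy:
  assumes new: "e \<in> revealed_by n (next_query n alg x t, answer_of n x (next_query n alg x t))"
      "e \<notin> revealed n (history n alg x t)"
    and expensive: "\<not> cheap_step n alg x t" and few: "card (revealed n (history n alg x t)) \<le> n div 6"
  shows "e \<in> heavy_revealed n (history n alg x (Suc t))"
proof -
  let ?h = "history n alg x t" and ?q = "next_query n alg x t"
  let ?h' = "history n alg x (Suc t)"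
  have h': "?h' = ?h @ [(?q, answer_of n x ?q)]"
    by (simp add: Let_def)
  have "reveals_new n alg x t"
    using new by (auto simp: reveals_new_def)
  then have "\<not> 2 * nbr_queries ?h v \<le> n div 6" if "?q = Q1 v p" for v p
    using expensive that by (auto simp: cheap_step_def cheap_nbr_step_def)
  moreover have "\<not> pair_queries ?h u + pair_queries ?h w \<le> n div 6" if "?q = Q2 u w" for u w
    using expensive that few \<open>reveals_new n alg x t\<close> by (auto simp: cheap_step_def cheap_pair_step_def)
  ultimately have heavy: "n div 6 < 2 * nbr_queries ?h (Inl (fst e)) \<or> n div 6 < 2 * nbr_queries ?h (Inr (snd e)) \<or>
      n div 6 < pair_queries ?h (Inl (fst e)) + pair_queries ?h (Inr (snd e))"
    using revealed_by_query[OF new(1)] by (metis add.commute not_le)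
  have mono: "nbr_queries ?h v \<le> nbr_queries ?h' v" "pair_queries ?h v \<le> pair_queries ?h' v" for v
    unfolding h' by (rule nbr_queries_append_mono pair_queries_append_mono)+
  from heavy have "n div 6 < 2 * nbr_queries ?h' (Inl (fst e)) \<or> n div 6 < 2 * nbr_queries ?h' (Inr (snd e)) \<or>
      n div 6 < pair_queries ?h' (Inl (fst e)) + pair_queries ?h' (Inr (snd e))"
    using mono[of "Inl (fst e)"] mono[of "Inr (snd e)"] by (elim disjE; linarith)
  moreover have "e \<in> revealed n ?h'"
    using new(1) unfolding h' by simp
  ultimately show ?thesis
    by (simp add: heavy_revealed_def)
qed

lemma revealed_le_cheap_steps_heavy:
  "min (card (revealed n (history n alg x t))) (n div 6 + 1) \<le>
     cheap_steps n alg x t + card (heavy_revealed n (history n alg x t))"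
proof (induction t)
  case 0
  then show ?case by simp
next
  case (Suc t)
  let ?h = "history n alg x t" and ?h' = "history n alg x (Suc t)"
  let ?new = "revealed_by n (next_query n alg x t, answer_of n x (next_query n alg x t))"
  have h': "?h' = ?h @ [(next_query n alg x t, answer_of n x (next_query n alg x t))]"
    by (simp add: Let_def)
  have R': "revealed n ?h' = revealed n ?h \<union> ?new"
    unfolding h' by simp
  have heavy_mono: "card (heavy_revealed n ?h) \<le> card (heavy_revealed n ?h')"
    unfolding h' by (intro card_mono heavy_revealed_mono) simp
  show ?case
  proof (cases "?new \<subseteq> revealed n ?h")
    case True
    then have "revealed n ?h' = revealed n ?h"
      using R' by blast
    then show ?thesis
      using Suc.IH heavy_mono cheap_steps_Suc[of n alg x t] by simp
  next
    case False
    then obtain e where e: "e \<in> ?new" "e \<notin> revealed n ?h"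
      by blast
    then have "?new = {e}"
      using revealed_by_subset_singleton by blast
    then have card_R': "card (revealed n ?h') = card (revealed n ?h) + 1"
      using R' e(2) by simp
    consider "n div 6 + 1 \<le> card (revealed n ?h)" | "cheap_step n alg x t"
      | "\<not> cheap_step n alg x t" "card (revealed n ?h) \<le> n div 6"
      by linarith
    then show ?thesis
    proof cases
      case 1
      then show ?thesis
        using Suc.IH heavy_mono card_R' cheap_steps_Suc[of n alg x t] by simp
    next
      case 2
      then show ?thesis
        using Suc.IH heavy_mono card_R' cheap_steps_Suc[of n alg x t] by simp
    next
      case 3
      have "e \<notin> heavy_revealed n ?h"
        using e(2) by (simp add: heavy_revealed_def)
      moreover have "insert e (heavy_revealed n ?h) \<subseteq> heavy_revealed n ?h'"
        using new_revealed_heavy[OF e 3] heavy_revealed_mono[of n ?h] unfolding h' by blast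
      ultimately have "card (heavy_revealed n ?h) + 1 \<le> card (heavy_revealed n ?h')"
        using card_mono[OF finite_heavy_revealed, of "insert e (heavy_revealed n ?h)"] by simp
      then show ?thesis
        using Suc.IH card_R' cheap_steps_Suc[of n alg x t] by simp
    qed
  qed
qed

lemma succeeds_by_mono:
  assumes x: "x \<in> inputs n" and "succeeds_by n alg x t" "t \<le> t'"
  shows "succeeds_by n alg x t'"
proof -
  have "card (discovered n alg x t) \<le> card (discovered n alg x t')"
    using finite_discovered[OF x] discovered_mono[OF assms(3)] by (rule card_mono)
  with assms(2) show ?thesis
    by (simp add: succeeds_by_def)
qed

text \<open>With \<open>k = n/6\<close> and \<open>40 T \<le> k\<^sup>2\<close>: at most \<open>k/5\<close> revealed edges are heavy, and if at most
  \<open>k\<close> edges are revealed then at most \<open>k/30\<close> discovered edges are unrevealed; so reaching \<open>2k\<close>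
  discovered edges requires at least \<open>k/2\<close> cheap revealing queries.\<close>

lemma cheap_steps_if_succeeds:
  assumes x: "x \<in> inputs n" and n: "6 dvd n" "0 < n div 6"
    and T: "40 * T \<le> n div 6 * (n div 6)" and succ: "succeeds_by n alg x T"
  shows "n div 6 \<le> 2 * cheap_steps n alg x T"
proof -
  let ?k = "n div 6" and ?h = "history n alg x T"
  define N where "N = card (revealed n ?h)"
  define E where "E = card (heavy_revealed n ?h)"
  define D where "D = card (discovered n alg x T - revealed n ?h)"
  have revealed: "min N (?k + 1) \<le> cheap_steps n alg x T + E"
    unfolding N_def E_def by (rule revealed_le_cheap_steps_heavy)
  have "card (discovered n alg x T \<inter> revealed n ?h) \<le> N"
    unfolding N_def by (intro card_mono) auto
  then have discovered: "2 * ?k \<le> N + D"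
    using succ card_Int_Diff[OF finite_discovered[OF x], where B = "revealed n ?h"] n(1)
    unfolding D_def succeeds_by_def by fastforce
  have "E * (?k + 1) \<le> 8 * T"
    unfolding E_def using card_heavy_revealed[OF x consistent_history] by simp
  then have "(5 * E) * (?k + 1) \<le> ?k * (?k + 1)"
    using T by simp
  then have heavy: "5 * E \<le> ?k"
    by (rule mult_right_le_imp_le) simp
  show ?thesis
  proof (cases "N \<le> ?k")
    case True
    have "card (fst x) = 5 * ?k"
      using card_perfect_matching_L2R2[OF inputs_matching[OF x]] n(1) by fastforce
    then have "D * (5 * ?k - 1 - N) \<le> 4 * T"
      using card_discovered_unrevealed[OF x, of alg T] unfolding D_def N_def by simp
    moreover have "D * (3 * ?k) \<le> D * (5 * ?k - 1 - N)"
      using True n(2) by (intro mult_le_mono2) linarith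
    ultimately have "(30 * D) * ?k \<le> ?k * ?k"
      using T by linarith
    then have "30 * D \<le> ?k"
      using n(2) by (rule mult_right_le_imp_le)
    then show ?thesis
      using revealed discovered heavy True by linarith
  next
    case False
    then show ?thesis
      using revealed heavy by linarith
  qed
qed

section \<open>Averaging over the inputs\<close>

lemma card_Collect_less_eq_sum: "card {s. s < T \<and> P s} = (\<Sum>s<T. of_bool (P s))" for T :: nat
proof -
  have "{s. s < T \<and> P s} = {..<T} \<inter> {s. P s}"
    by auto
  then show ?thesis by simp
qed

lemma sum_cheap_steps_le:
  "(\<Sum>x\<in>inputs n. cheap_steps n alg x T) * (n div 6) \<le> 3 * T * card (inputs n)"
proof -
  have "(\<Sum>x\<in>inputs n. cheap_steps n alg x T) = (\<Sum>s<T. \<Sum>x\<in>inputs n. of_bool (cheap_step n alg x s))"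
    unfolding cheap_steps_def card_Collect_less_eq_sum by (rule sum.swap)
  also have "\<dots> = (\<Sum>s<T. card {x \<in> inputs n. cheap_step n alg x s})"
    using finite_inputs by (simp add: Collect_conj_eq Int_commute)
  finally have "(\<Sum>x\<in>inputs n. cheap_steps n alg x T) * (n div 6) =
      (\<Sum>s<T. card {x \<in> inputs n. cheap_step n alg x s} * (n div 6))"
    by (simp add: sum_distrib_right)
  also have "\<dots> \<le> (\<Sum>s<T. 3 * card (inputs n))"
    by (intro sum_mono card_cheap_steps)
  finally show ?thesis
    by simp
qed

lemma card_succeeding_inputs:
  assumes n: "6 dvd n" "0 < n div 6" and T: "40 * T \<le> n div 6 * (n div 6)"
  shows "40 * card {x \<in> inputs n. succeeds_by n alg x T} \<le> 6 * card (inputs n)"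
proof -
  let ?S = "{x \<in> inputs n. succeeds_by n alg x T}" and ?k = "n div 6"
  have "card ?S * ?k = (\<Sum>x\<in>?S. ?k)"
    by simp
  also have "\<dots> \<le> (\<Sum>x\<in>?S. 2 * cheap_steps n alg x T)"
    using cheap_steps_if_succeeds[OF _ n T] by (intro sum_mono) blast
  also have "\<dots> \<le> (\<Sum>x\<in>inputs n. 2 * cheap_steps n alg x T)"
    using finite_inputs by (intro sum_mono2) auto
  finally have "card ?S * ?k * ?k \<le> 2 * ((\<Sum>x\<in>inputs n. cheap_steps n alg x T) * ?k)"
    by (simp add: sum_distrib_left mult_le_mono1 mult.assoc)
  also have "\<dots> \<le> 2 * (3 * T * card (inputs n))"
    using sum_cheap_steps_le[of n alg T] by (rule mult_le_mono2)
  finally have "40 * card ?S * (?k * ?k) \<le> 6 * card (inputs n) * (40 * T)"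
    by (simp add: algebra_simps)
  also have "\<dots> \<le> 6 * card (inputs n) * (?k * ?k)"
    using T by simp
  finally show ?thesis
    using n(2) by simp
qed

lemma num_queries_gt:
  assumes x: "x \<in> inputs n" and "\<exists>t. succeeds_by n alg x t" "\<not> succeeds_by n alg x T"
  shows "T < num_queries n alg x"
proof (rule ccontr)
  assume "\<not> T < num_queries n alg x"
  moreover have "succeeds_by n alg x (num_queries n alg x)"
    unfolding num_queries_def using assms(2) by (rule LeastI_ex)
  ultimately show False
    using succeeds_by_mono[OF x] assms(3) by simp
qed

lemma expected_queries_ge:
  assumes terminates: "\<forall>x\<in>inputs n. \<exists>t. succeeds_by n alg x t"
    and few: "40 * card {x \<in> inputs n. succeeds_by n alg x T} \<le> 6 * card (inputs n)"
  shows "17 / 20 * real (T + 1) \<le> expected_queries n alg"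
proof -
  let ?I = "inputs n" and ?S = "{x \<in> inputs n. succeeds_by n alg x T}"
  have "real (card (?I - ?S)) * real (T + 1) = (\<Sum>x\<in>?I - ?S. real (T + 1))"
    by simp
  also have "\<dots> \<le> (\<Sum>x\<in>?I - ?S. real (num_queries n alg x))"
  proof (rule sum_mono)
    fix x assume "x \<in> ?I - ?S"
    then have "T < num_queries n alg x"
      using num_queries_gt terminates by blast
    then show "real (T + 1) \<le> real (num_queries n alg x)"
      by simp
  qed
  also have "\<dots> \<le> (\<Sum>x\<in>?I. real (num_queries n alg x))"
    using finite_inputs by (intro sum_mono2) auto
  finally have sum: "real (card (?I - ?S)) * real (T + 1) \<le> (\<Sum>x\<in>?I. real (num_queries n alg x))" .
  have "card (?I - ?S) = card ?I - card ?S"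
    using finite_inputs by (intro card_Diff_subset) auto
  with few have "17 / 20 * real (card ?I) \<le> real (card (?I - ?S))"
    by simp
  then have "17 / 20 * real (card ?I) * real (T + 1) \<le> real (card (?I - ?S)) * real (T + 1)"
    by (rule mult_right_mono) simp
  with sum have "17 / 20 * real (T + 1) * real (card ?I) \<le> (\<Sum>x\<in>?I. real (num_queries n alg x))"
    by (simp add: algebra_simps)
  moreover have "0 < card ?I"
    using finite_inputs inputs_nonempty card_gt_0_iff by blast
  ultimately show ?thesis
    by (simp add: expected_queries_def pos_le_divide_eq)
qed

theorem mainTheorem12:
  shows "\<exists>c > (0::real). \<exists>N. \<forall>n \<ge> N. 6 dvd n \<longrightarrow>
           (\<forall>alg. (\<forall>x \<in> inputs n. \<exists>t. succeeds_by n alg x t) \<longrightarrow>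
                  expected_queries n alg \<ge> c * real n ^ 2)"
proof (intro exI[of _ "1 / 2000"] conjI exI[of _ 6] allI impI)
  fix n alg
  assume n: "6 \<le> n" "6 dvd n" and terminates: "\<forall>x \<in> inputs n. \<exists>t. succeeds_by n alg x t"
  define k where "k = n div 6"
  define T where "T = k * k div 40"
  have "40 * card {x \<in> inputs n. succeeds_by n alg x T} \<le> 6 * card (inputs n)"
    using n by (intro card_succeeding_inputs) (simp_all add: k_def T_def)
  with terminates have "17 / 20 * real (T + 1) \<le> expected_queries n alg"
    by (rule expected_queries_ge)
  moreover have "1 / 2000 * real n ^ 2 \<le> 17 / 20 * real (T + 1)"
  proof -
    have "m \<le> 40 * (m div 40 + 1)" for m :: nat
      by presburger
    then have "k * k \<le> 40 * (T + 1)"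
      unfolding T_def .
    then have "real k * real k \<le> 40 * real (T + 1)"
      using of_nat_mono by fastforce
    moreover have "real n = 6 * real k"
      using n(2) by (auto simp: k_def)
    ultimately show ?thesis
      by (simp add: power2_eq_square)
  qed
  ultimately show "1 / 2000 * real n ^ 2 \<le> expected_queries n alg"
    by linarith
qed simp

end
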